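(* Let $c\in(0,1)$, $f_{\mathrm{cost}}(x)=x^c$, and $F_{\mathrm{cost}}(p)=\sum_i p(i)^c$. For every set $S$ of $m=2$ discrete probability distributions, the greedy coupling satisfies $$F_{\mathrm{cost}}(\mathcal G_S)\le\Big(1-c^{1/(1-c)}(1/c-1)\Big)^{-1}\min_C F_{\mathrm{cost}}(C),$$ where the minimum is over couplings $C$ of $S$.
   Context: A coupling of two distributions is a joint distribution with those marginals; its cost is $F_{\mathrm{cost}}$ applied to its vector of probabilities. Greedy coupling algorithm: maintain the remaining masses of the states of each distribution in $S$. Repeatedly: let $r=\min_{p\in S}\max_j p(j)$; if $r=0$ stop; otherwise append $r$ as the next state of $\mathcal G_S$ and subtract $r$ from the largest remaining state of every distribution (ties broken arbitrarily). $\mathcal G_S$ is the resulting list of state masses. *)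

theory Defs
  imports Complex_Main
begin

definition is_distr :: "('a::finite \<Rightarrow> real) \<Rightarrow> bool" where
  "is_distr p \<longleftrightarrow> (\<forall>x. 0 \<le> p x) \<and> (\<Sum>x\<in>UNIV. p x) = 1"

definition is_coupling :: "('a::finite \<Rightarrow> real) \<Rightarrow> ('b::finite \<Rightarrow> real) \<Rightarrow> ('a \<times> 'b \<Rightarrow> real) \<Rightarrow> bool" where
  "is_coupling p q C \<longleftrightarrow> (\<forall>z. 0 \<le> C z)
     \<and> (\<forall>x. (\<Sum>y\<in>UNIV. C (x, y)) = p x)
     \<and> (\<forall>y. (\<Sum>x\<in>UNIV. C (x, y)) = q y)"

definition F_cost :: "real \<Rightarrow> ('a::finite \<Rightarrow> real) \<Rightarrow> real" where
  "F_cost c C = (\<Sum>z\<in>UNIV. C z powr c)"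

definition F_cost_list :: "real \<Rightarrow> real list \<Rightarrow> real" where
  "F_cost_list c G = sum_list (map (\<lambda>r. r powr c) G)"

text \<open>Runs of the greedy coupling algorithm for two distributions (remaining masses p, q),
  producing the list of state masses; ties are broken arbitrarily, so every choice
  of a maximal state is a possible run.\<close>
inductive greedy_run :: "('a::finite \<Rightarrow> real) \<Rightarrow> ('b::finite \<Rightarrow> real) \<Rightarrow> real list \<Rightarrow> bool" where
  stop: "min (Max (range p)) (Max (range q)) = 0 \<Longrightarrow> greedy_run p q []"
| step: "r = min (Max (range p)) (Max (range q)) \<Longrightarrow> r \<noteq> 0 \<Longrightarrow>
         p i = Max (range p) \<Longrightarrow> q j = Max (range q) \<Longrightarrow>
         greedy_run (p(i := p i - r)) (q(j := q j - r)) rs \<Longrightarrow> greedy_run p q (r # rs)"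

end

(*
  Layer-cake argument. For 0 < c < 1 and v \<ge> 0,
    v^c = \<integral>\<^sub>0^\<infinity> [0 < v \<le> t] v \<cdot> (1 - c) t^(c-2) dt,
  so the cost of a distribution X is the weighted integral of its light mass m\<^sub>X(t), the total
  mass of the states of size at most t. A state of p or q is split by a coupling C into states
  that are no larger, hence m\<^sub>C \<ge> max m\<^sub>p m\<^sub>q. A greedy step of size r exhausts a maximal state
  of one marginal, so the light mass of the greedy coupling exceeds max m\<^sub>p m\<^sub>q only by the
  remainder a < r of the other state, on the window a \<le> t < r. Integrating,
  F(G) \<le> F(C) + \<Sum> (a^c - a r^(c-1)), and maximizing over a gives
  a^c - a r^(c-1) \<le> c^(1/(1-c)) (1/c - 1) r^c.
*)

theory Submission
  imports Defs "HOL-Analysis.Analysis"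
begin

lemma powr_minus_self_le:
  fixes c s :: real
  assumes c: "0 < c" "c < 1" and s: "0 \<le> s"
  shows "s powr c - s \<le> c powr (1 / (1 - c)) * (1 / c - 1)"
proof -
  define s\<^sub>0 where "s\<^sub>0 = c powr (1 / (1 - c))"
  have s\<^sub>0_pos: "0 < s\<^sub>0" using c by (simp add: s\<^sub>0_def)
  have "1 / (1 - c) * (c - 1) = -1"
    using c by (simp add: field_simps)
  then have "s\<^sub>0 powr (c - 1) = c powr (-1)"
    by (simp add: s\<^sub>0_def powr_powr)
  then have s\<^sub>0_critical: "c * s\<^sub>0 powr (c - 1) = 1"
    using c by (simp add: powr_minus)
  have "s\<^sub>0 powr c = s\<^sub>0 * s\<^sub>0 powr (c - 1)"
    using s\<^sub>0_pos by (simp add: powr_mult_base)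
  then have s\<^sub>0_powr: "(1 - c) * s\<^sub>0 powr c = s\<^sub>0 * (1 / c - 1)"
    using s\<^sub>0_critical c by (simp add: field_simps)
  show ?thesis
  proof (cases "s = 0")
    case True
    then show ?thesis using c s\<^sub>0_pos s\<^sub>0_powr by (simp add: s\<^sub>0_def[symmetric] field_simps)
  next
    case False
    then have "(s / s\<^sub>0) powr c * 1 powr (1 - c) \<le> c * (s / s\<^sub>0) + (1 - c) * 1"
      using c s s\<^sub>0_pos by (intro Youngs_inequality_0) auto
    then have "s powr c \<le> s\<^sub>0 powr c * (c * (s / s\<^sub>0) + (1 - c))"
      using s s\<^sub>0_pos by (simp add: powr_divide divide_le_eq mult.commute)
    also have "\<dots> = c * s * (s\<^sub>0 powr c / s\<^sub>0) + (1 - c) * s\<^sub>0 powr c"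
      by (simp add: algebra_simps)
    also have "s\<^sub>0 powr c / s\<^sub>0 = s\<^sub>0 powr (c - 1)"
      using s\<^sub>0_pos by (simp add: powr_diff)
    also have "c * s * s\<^sub>0 powr (c - 1) + (1 - c) * s\<^sub>0 powr c = s + s\<^sub>0 * (1 / c - 1)"
      using s\<^sub>0_critical s\<^sub>0_powr by (metis mult.assoc mult.commute mult_1)
    finally show ?thesis by (simp add: s\<^sub>0_def)
  qed
qed

lemma powr_minus_linear_le:
  fixes c a r :: real
  assumes c: "0 < c" "c < 1" and a: "0 \<le> a" and r: "0 < r"
  shows "a powr c - a * r powr (c - 1) \<le> c powr (1 / (1 - c)) * (1 / c - 1) * r powr c"
proof -
  have "a powr c - a * r powr (c - 1) = r powr c * ((a / r) powr c - a / r)"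
    using r by (simp add: powr_divide powr_diff field_simps)
  also have "\<dots> \<le> r powr c * (c powr (1 / (1 - c)) * (1 / c - 1))"
    using powr_minus_self_le[OF c, of "a / r"] a r by (intro mult_left_mono) auto
  finally show ?thesis by (simp add: mult.commute)
qed

lemma powr_tail_has_integral:
  fixes c \<theta> :: real
  assumes c: "0 < c" "c < 1" and \<theta>: "0 < \<theta>"
  shows "((\<lambda>t. if \<theta> \<le> t then (1 - c) * t powr (c - 2) else 0) has_integral \<theta> powr (c - 1)) {0<..}"
proof -
  have "((\<lambda>t. t powr (c - 2)) has_integral - (\<theta> powr (c - 2 + 1)) / (c - 2 + 1)) {\<theta>..}"
    using c \<theta> by (intro has_integral_powr_to_inf) auto
  then have "((\<lambda>t. (1 - c) * t powr (c - 2)) has_integral (1 - c) * (\<theta> powr (c - 1) / (1 - c))) {\<theta>..}"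
    by (intro has_integral_mult_right) (simp add: minus_divide_right)
  then have "((\<lambda>t. if t \<in> {\<theta>..} then (1 - c) * t powr (c - 2) else 0) has_integral \<theta> powr (c - 1)) {0<..}"
    using c \<theta> by (subst has_integral_restrict) auto
  then show ?thesis by simp
qed

lemma has_integral_sum_list:
  assumes "\<And>x. x \<in> set xs \<Longrightarrow> (f x has_integral I x) S"
  shows "((\<lambda>t. \<Sum>x\<leftarrow>xs. f x t) has_integral (\<Sum>x\<leftarrow>xs. I x)) S"
  using assms by (induction xs) (auto intro: has_integral_add)

definition atom_upto :: "real \<Rightarrow> real \<Rightarrow> real" where
  "atom_upto t v = (if 0 < v \<and> v \<le> t then v else 0)"

definition mass_upto :: "('a::finite \<Rightarrow> real) \<Rightarrow> real \<Rightarrow> real" where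
  "mass_upto X t = (\<Sum>z\<in>UNIV. atom_upto t (X z))"

definition list_mass_upto :: "real list \<Rightarrow> real \<Rightarrow> real" where
  "list_mass_upto G t = (\<Sum>r\<leftarrow>G. atom_upto t r)"

definition excess_mass :: "(real \<times> real) list \<Rightarrow> real \<Rightarrow> real" where
  "excess_mass D t = (\<Sum>(a, r)\<leftarrow>D. if a \<le> t \<and> t < r then a else 0)"

lemma atom_upto_has_integral:
  fixes c v :: real
  assumes c: "0 < c" "c < 1" and v: "0 \<le> v"
  shows "((\<lambda>t. atom_upto t v * ((1 - c) * t powr (c - 2))) has_integral v powr c) {0<..}"
proof (cases "v = 0")
  case True
  then show ?thesis by (simp add: atom_upto_def)
next
  case False
  with v have v_pos: "0 < v" by simp
  have "((\<lambda>t. v * (if v \<le> t then (1 - c) * t powr (c - 2) else 0)) has_integral v * v powr (c - 1)) {0<..}"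
    by (intro has_integral_mult_right powr_tail_has_integral c v_pos)
  moreover have "v * v powr (c - 1) = v powr c"
    using v_pos by (simp add: powr_mult_base)
  ultimately show ?thesis
    using v_pos by (auto simp: atom_upto_def intro: has_integral_eq[rotated])
qed

lemma mass_upto_has_integral:
  fixes X :: "'a::finite \<Rightarrow> real"
  assumes c: "0 < c" "c < 1" and X: "\<And>z. 0 \<le> X z"
  shows "((\<lambda>t. mass_upto X t * ((1 - c) * t powr (c - 2))) has_integral F_cost c X) {0<..}"
  unfolding mass_upto_def F_cost_def sum_distrib_right
  by (intro has_integral_sum atom_upto_has_integral c X) auto

lemma list_mass_upto_has_integral:
  assumes c: "0 < c" "c < 1" and G: "\<And>r. r \<in> set G \<Longrightarrow> 0 \<le> r"
  shows "((\<lambda>t. list_mass_upto G t * ((1 - c) * t powr (c - 2))) has_integral F_cost_list c G) {0<..}"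
  unfolding list_mass_upto_def F_cost_list_def sum_list_mult_const[symmetric]
  by (intro has_integral_sum_list atom_upto_has_integral c G)

lemma excess_mass_has_integral:
  assumes c: "0 < c" "c < 1" and D: "\<And>a r. (a, r) \<in> set D \<Longrightarrow> 0 \<le> a \<and> a \<le> r \<and> 0 < r"
  shows "((\<lambda>t. excess_mass D t * ((1 - c) * t powr (c - 2))) has_integral
    (\<Sum>(a, r)\<leftarrow>D. a powr c - a * r powr (c - 1))) {0<..}"
  unfolding excess_mass_def sum_list_mult_const[symmetric]
proof (intro has_integral_sum_list, clarify)
  fix a r assume "(a, r) \<in> set D"
  then have a: "0 \<le> a" "a \<le> r" and r: "0 < r" using D by auto
  have "((\<lambda>t. atom_upto t a * ((1 - c) * t powr (c - 2))
      - a * (if r \<le> t then (1 - c) * t powr (c - 2) else 0)) has_integral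
      a powr c - a * r powr (c - 1)) {0<..}"
    by (intro has_integral_diff has_integral_mult_right atom_upto_has_integral powr_tail_has_integral c a r)
  then show "((\<lambda>t. (if a \<le> t \<and> t < r then a else 0) * ((1 - c) * t powr (c - 2))) has_integral
      a powr c - a * r powr (c - 1)) {0<..}"
    using a by (auto simp: atom_upto_def intro: has_integral_eq[rotated])
qed

lemma sum_UNIV_fun_upd:
  fixes f :: "'a::finite \<Rightarrow> 'b::ab_group_add"
  shows "(\<Sum>z\<in>UNIV. (f(i := v)) z) = (\<Sum>z\<in>UNIV. f z) - f i + v"
proof -
  have "(\<Sum>z\<in>UNIV. (f(i := v)) z) = v + (\<Sum>z\<in>UNIV - {i}. f z)"
    by (subst sum.remove[of _ i]) (auto intro: sum.cong)
  moreover have "(\<Sum>z\<in>UNIV. f z) = f i + (\<Sum>z\<in>UNIV - {i}. f z)"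
    by (subst sum.remove[of _ i]) auto
  ultimately show ?thesis by (simp add: algebra_simps)
qed

lemma mass_upto_fun_upd:
  "mass_upto (X(i := v)) t = mass_upto X t - atom_upto t (X i) + atom_upto t v"
proof -
  have "mass_upto (X(i := v)) t = (\<Sum>z\<in>UNIV. ((\<lambda>z. atom_upto t (X z))(i := atom_upto t v)) z)"
    unfolding mass_upto_def by (intro sum.cong) auto
  then show ?thesis
    unfolding mass_upto_def by (simp only: sum_UNIV_fun_upd)
qed

lemma atom_upto_le: "0 \<le> v \<Longrightarrow> atom_upto t v \<le> v"
  by (simp add: atom_upto_def)

lemma mass_upto_nonneg: "0 \<le> mass_upto X t"
  unfolding mass_upto_def atom_upto_def by (intro sum_nonneg) simp

lemma mass_upto_le_sum:
  assumes "\<And>z. 0 \<le> X z"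
  shows "mass_upto X t \<le> (\<Sum>z\<in>UNIV. X z)"
  unfolding mass_upto_def by (intro sum_mono atom_upto_le assms)

lemma mass_upto_eq_sum:
  assumes "\<And>z. 0 \<le> X z" and "\<And>z. X z \<le> t"
  shows "mass_upto X t = (\<Sum>z\<in>UNIV. X z)"
  unfolding mass_upto_def using assms by (intro sum.cong) (auto simp: atom_upto_def order_le_less)

lemma exhausting_step_mass_upto_le:
  fixes p :: "'a::finite \<Rightarrow> real" and q :: "'b::finite \<Rightarrow> real"
  assumes p: "\<And>x. 0 \<le> p x" and q: "\<And>y. 0 \<le> q y"
    and sums: "(\<Sum>x\<in>UNIV. p x) = (\<Sum>y\<in>UNIV. q y)"
    and p_max: "\<And>x. p x \<le> p i" and r: "r = p i" "r \<le> q j"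
  shows "\<exists>a. 0 \<le> a \<and> a \<le> r \<and> (\<forall>t. atom_upto t r
    + max (mass_upto (p(i := p i - r)) t) (mass_upto (q(j := q j - r)) t)
    \<le> max (mass_upto p t) (mass_upto q t) + excess_mass [(a, r)] t)"
proof (intro exI conjI allI)
  \<comment> \<open>a remainder q j - r \<ge> r is never light while t < r\<close>
  define a where "a = (if q j - r < r then q j - r else 0)"
  show "0 \<le> a" "a \<le> r"
    using r p[of i] by (auto simp: a_def)
  fix t
  let ?p' = "p(i := p i - r)" and ?q' = "q(j := q j - r)"
  show "atom_upto t r + max (mass_upto ?p' t) (mass_upto ?q' t)
    \<le> max (mass_upto p t) (mass_upto q t) + excess_mass [(a, r)] t"
  proof (cases "r \<le> t")
    case True
    have "mass_upto ?p' t \<le> (\<Sum>x\<in>UNIV. p x) - r"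
      using mass_upto_le_sum[of ?p' t] sum_UNIV_fun_upd[of p i "p i - r"] p r by simp
    moreover have "mass_upto ?q' t \<le> (\<Sum>x\<in>UNIV. p x) - r"
      using mass_upto_le_sum[of ?q' t] sum_UNIV_fun_upd[of q j "q j - r"] q r sums by simp
    moreover have "mass_upto p t = (\<Sum>x\<in>UNIV. p x)"
      using p p_max r True by (intro mass_upto_eq_sum) (auto intro: order_trans)
    moreover have "atom_upto t r \<le> r"
      using r p[of i] by (intro atom_upto_le) simp
    ultimately show ?thesis using True by (auto simp: excess_mass_def)
  next
    case False
    have "mass_upto ?p' t = mass_upto p t"
      using False r by (simp add: mass_upto_fun_upd atom_upto_def)
    moreover have "mass_upto ?q' t = mass_upto q t + atom_upto t (q j - r)"
      using False r by (simp add: mass_upto_fun_upd atom_upto_def)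
    moreover have "atom_upto t (q j - r) \<le> excess_mass [(a, r)] t"
      using False r by (auto simp: atom_upto_def excess_mass_def a_def)
    ultimately show ?thesis
      using False by (auto simp: atom_upto_def)
  qed
qed

lemma greedy_step_mass_upto_le:
  fixes p :: "'a::finite \<Rightarrow> real" and q :: "'b::finite \<Rightarrow> real"
  assumes p: "\<And>x. 0 \<le> p x" and q: "\<And>y. 0 \<le> q y"
    and sums: "(\<Sum>x\<in>UNIV. p x) = (\<Sum>y\<in>UNIV. q y)"
    and i: "p i = Max (range p)" and j: "q j = Max (range q)"
    and r: "r = min (Max (range p)) (Max (range q))"
  shows "\<exists>a. 0 \<le> a \<and> a \<le> r \<and> (\<forall>t. atom_upto t r
    + max (mass_upto (p(i := p i - r)) t) (mass_upto (q(j := q j - r)) t)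
    \<le> max (mass_upto p t) (mass_upto q t) + excess_mass [(a, r)] t)"
proof (cases "p i \<le> q j")
  case True
  have "p x \<le> p i" for x
    unfolding i by (intro Max_ge) auto
  moreover have "r = p i"
    using True r i j by simp
  ultimately show ?thesis
    using exhausting_step_mass_upto_le[OF p q sums] True by blast
next
  case False
  have "q y \<le> q j" for y
    unfolding j by (intro Max_ge) auto
  moreover have "r = q j"
    using False unfolding r i[symmetric] j[symmetric] by simp
  ultimately show ?thesis
    using exhausting_step_mass_upto_le[OF q p sums[symmetric]] False
    by (simp only: max.commute not_le less_imp_le)
qed

lemma greedy_run_mass_upto_le:
  fixes p :: "'a::finite \<Rightarrow> real" and q :: "'b::finite \<Rightarrow> real"
  assumes "greedy_run p q G" and "\<And>x. 0 \<le> p x" and "\<And>y. 0 \<le> q y"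
    and "(\<Sum>x\<in>UNIV. p x) = (\<Sum>y\<in>UNIV. q y)"
  shows "\<exists>D. map snd D = G \<and> (\<forall>a r. (a, r) \<in> set D \<longrightarrow> 0 \<le> a \<and> a \<le> r \<and> 0 < r) \<and>
    (\<forall>t. list_mass_upto G t \<le> max (mass_upto p t) (mass_upto q t) + excess_mass D t)"
  using assms
proof (induction rule: greedy_run.induct)
  case (stop p q)
  show ?case
    by (intro exI[of _ "[]"]) (simp add: list_mass_upto_def excess_mass_def le_max_iff_disj mass_upto_nonneg)
next
  case (step r p q i j G)
  have "0 \<le> r"
    unfolding step.hyps(1) min.bounded_iff step.hyps(3,4)[symmetric] using step.prems by simp
  with step.hyps(2) have r_pos: "0 < r" by simp
  have r_le: "r \<le> p i" "r \<le> q j"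
    using step.hyps(1,3,4) by simp_all
  have "(\<Sum>x\<in>UNIV. (p(i := p i - r)) x) = (\<Sum>y\<in>UNIV. (q(j := q j - r)) y)"
    using step.prems(3) by (simp only: sum_UNIV_fun_upd)
  moreover have "0 \<le> (p(i := p i - r)) x" "0 \<le> (q(j := q j - r)) y" for x y
    using step.prems(1,2) r_le by simp_all
  ultimately obtain D where D: "map snd D = G" "\<forall>a r. (a, r) \<in> set D \<longrightarrow> 0 \<le> a \<and> a \<le> r \<and> 0 < r"
    and IH: "\<forall>t. list_mass_upto G t
      \<le> max (mass_upto (p(i := p i - r)) t) (mass_upto (q(j := q j - r)) t) + excess_mass D t"
    using step.IH by blast
  obtain a where a: "0 \<le> a" "a \<le> r" and step_le: "\<forall>t. atom_upto t r
      + max (mass_upto (p(i := p i - r)) t) (mass_upto (q(j := q j - r)) t)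
      \<le> max (mass_upto p t) (mass_upto q t) + excess_mass [(a, r)] t"
    using greedy_step_mass_upto_le[OF step.prems step.hyps(3,4,1)] by blast
  have "list_mass_upto (r # G) t \<le> max (mass_upto p t) (mass_upto q t) + excess_mass ((a, r) # D) t" for t
    using IH[rule_format, of t] step_le[rule_format, of t]
    by (simp add: list_mass_upto_def excess_mass_def)
  then show ?case
    using D a r_pos by (intro exI[of _ "(a, r) # D"]) auto
qed

lemma atom_upto_sum_le:
  assumes "finite A" and f: "\<And>x. x \<in> A \<Longrightarrow> 0 \<le> f x"
  shows "atom_upto t (\<Sum>x\<in>A. f x) \<le> (\<Sum>x\<in>A. atom_upto t (f x))"
proof (cases "0 < (\<Sum>x\<in>A. f x) \<and> (\<Sum>x\<in>A. f x) \<le> t")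
  case True
  have "f x \<le> t" if "x \<in> A" for x
    using member_le_sum[of x A f] assms that True by force
  then have "(\<Sum>x\<in>A. atom_upto t (f x)) = (\<Sum>x\<in>A. f x)"
    using f by (intro sum.cong) (auto simp: atom_upto_def order_le_less)
  then show ?thesis using True by (simp add: atom_upto_def)
next
  case False
  then have "atom_upto t (\<Sum>x\<in>A. f x) = 0"
    by (simp add: atom_upto_def)
  moreover have "0 \<le> (\<Sum>x\<in>A. atom_upto t (f x))"
    by (intro sum_nonneg) (simp add: atom_upto_def)
  ultimately show ?thesis by simp
qed

lemma max_mass_upto_le_coupling:
  assumes "is_coupling p q C"
  shows "max (mass_upto p t) (mass_upto q t) \<le> mass_upto C t"
proof -
  have C: "\<And>z. 0 \<le> C z" and p: "\<And>x. (\<Sum>y\<in>UNIV. C (x, y)) = p x"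
    and q: "\<And>y. (\<Sum>x\<in>UNIV. C (x, y)) = q y"
    using assms unfolding is_coupling_def by auto
  have C_rows: "mass_upto C t = (\<Sum>x\<in>UNIV. \<Sum>y\<in>UNIV. atom_upto t (C (x, y)))"
    unfolding mass_upto_def
    by (simp add: sum.cartesian_product UNIV_Times_UNIV[symmetric] del: UNIV_Times_UNIV)
  have "mass_upto p t \<le> (\<Sum>x\<in>UNIV. \<Sum>y\<in>UNIV. atom_upto t (C (x, y)))"
    unfolding mass_upto_def p[symmetric] using C by (intro sum_mono atom_upto_sum_le) auto
  moreover have "mass_upto q t \<le> (\<Sum>y\<in>UNIV. \<Sum>x\<in>UNIV. atom_upto t (C (x, y)))"
    unfolding mass_upto_def q[symmetric] using C by (intro sum_mono atom_upto_sum_le) auto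
  ultimately show ?thesis
    unfolding C_rows by (simp add: sum.swap[of _ "UNIV :: 'b set"])
qed

lemma cost_le_by_mass_upto:
  fixes X :: "'a::finite \<Rightarrow> real"
  assumes c: "0 < c" "c < 1" and G: "\<And>r. r \<in> set G \<Longrightarrow> 0 \<le> r" and X: "\<And>z. 0 \<le> X z"
    and D: "\<And>a r. (a, r) \<in> set D \<Longrightarrow> 0 \<le> a \<and> a \<le> r \<and> 0 < r"
    and le: "\<And>t. 0 < t \<Longrightarrow> list_mass_upto G t \<le> mass_upto X t + excess_mass D t"
  shows "F_cost_list c G \<le> F_cost c X + (\<Sum>(a, r)\<leftarrow>D. a powr c - a * r powr (c - 1))"
proof (rule has_integral_le)
  show "((\<lambda>t. list_mass_upto G t * ((1 - c) * t powr (c - 2))) has_integral F_cost_list c G) {0<..}"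
    by (rule list_mass_upto_has_integral[OF c G])
  show "((\<lambda>t. mass_upto X t * ((1 - c) * t powr (c - 2)) + excess_mass D t * ((1 - c) * t powr (c - 2)))
    has_integral F_cost c X + (\<Sum>(a, r)\<leftarrow>D. a powr c - a * r powr (c - 1))) {0<..}"
    by (intro has_integral_add mass_upto_has_integral excess_mass_has_integral c X D)
  fix t :: real assume "t \<in> {0<..}"
  then show "list_mass_upto G t * ((1 - c) * t powr (c - 2))
    \<le> mass_upto X t * ((1 - c) * t powr (c - 2)) + excess_mass D t * ((1 - c) * t powr (c - 2))"
    using le[of t] c by (simp add: distrib_right[symmetric] mult_right_mono)
qed

lemma excess_cost_le:
  assumes c: "0 < c" "c < 1" and D: "\<And>a r. (a, r) \<in> set D \<Longrightarrow> 0 \<le> a \<and> 0 < r"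
  shows "(\<Sum>(a, r)\<leftarrow>D. a powr c - a * r powr (c - 1))
    \<le> c powr (1 / (1 - c)) * (1 / c - 1) * F_cost_list c (map snd D)"
proof -
  have "(\<Sum>(a, r)\<leftarrow>D. a powr c - a * r powr (c - 1))
      \<le> (\<Sum>(a, r)\<leftarrow>D. c powr (1 / (1 - c)) * (1 / c - 1) * r powr c)"
    using D by (intro sum_list_mono) (auto intro: powr_minus_linear_le[OF c])
  also have "\<dots> = c powr (1 / (1 - c)) * (1 / c - 1) * F_cost_list c (map snd D)"
    by (induction D) (auto simp: F_cost_list_def algebra_simps)
  finally show ?thesis .
qed

lemma greedy_loss_less_one:
  fixes c :: real
  assumes "0 < c" "c < 1"
  shows "c powr (1 / (1 - c)) * (1 / c - 1) < 1"
proof -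
  have "c powr (1 / (1 - c)) * (1 / c - 1) \<le> c * (1 / c - 1)"
    using assms by (intro mult_right_mono powr_le_one_le) (auto simp: field_simps)
  also have "\<dots> = 1 - c"
    using assms by (simp add: field_simps)
  finally show ?thesis using assms by simp
qed

theorem corollary3:
  fixes c :: real and p :: "'a::finite \<Rightarrow> real" and q :: "'b::finite \<Rightarrow> real"
    and G :: "real list" and C :: "'a \<times> 'b \<Rightarrow> real"
  assumes "0 < c" "c < 1"
    and "is_distr p" "is_distr q"
    and "greedy_run p q G"
    and "is_coupling p q C"
  shows "F_cost_list c G \<le> F_cost c C / (1 - c powr (1 / (1 - c)) * (1 / c - 1))"
proof -
  have c: "0 < c" "c < 1" by fact+
  have p: "\<And>x. 0 \<le> p x" and q: "\<And>y. 0 \<le> q y"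
    and sums: "(\<Sum>x\<in>UNIV. p x) = (\<Sum>y\<in>UNIV. q y)"
    using assms(3,4) unfolding is_distr_def by auto
  have C: "\<And>z. 0 \<le> C z"
    using assms(6) unfolding is_coupling_def by auto
  obtain D where G: "map snd D = G" and D: "\<forall>a r. (a, r) \<in> set D \<longrightarrow> 0 \<le> a \<and> a \<le> r \<and> 0 < r"
    and greedy: "\<forall>t. list_mass_upto G t \<le> max (mass_upto p t) (mass_upto q t) + excess_mass D t"
    using greedy_run_mass_upto_le[OF assms(5) p q sums] by blast
  have "F_cost_list c G \<le> F_cost c C + (\<Sum>(a, r)\<leftarrow>D. a powr c - a * r powr (c - 1))"
  proof (rule cost_le_by_mass_upto[OF c _ C])
    show "\<And>r. r \<in> set G \<Longrightarrow> 0 \<le> r"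
      using D G by force
    show "list_mass_upto G t \<le> mass_upto C t + excess_mass D t" for t
      using greedy[rule_format, of t] max_mass_upto_le_coupling[OF assms(6), of t] by linarith
  qed (use D in auto)
  also have "\<dots> \<le> F_cost c C + c powr (1 / (1 - c)) * (1 / c - 1) * F_cost_list c G"
    using excess_cost_le[OF c, of D] D G by auto
  finally have "(1 - c powr (1 / (1 - c)) * (1 / c - 1)) * F_cost_list c G \<le> F_cost c C"
    by (simp add: algebra_simps)
  then show ?thesis
    using greedy_loss_less_one[OF c] by (simp add: pos_le_divide_eq mult.commute)
qed

end
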